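(* Let $w:\{0,1\}^L\to\mathbb{R}_{\ge 0}$ be a generic fitness landscape displaying universal positive epistasis. Then $w$ induces the standard staircase triangulation of $[0,1]^L$.
   Context: Genotypes $g\in\{0,1\}^L$ are identified with subsets $\{i:g_i=1\}$ of $\mathcal{L}=\{1,\dots,L\}$ and with vertices of $[0,1]^L$. The landscape displays universal positive epistasis if for all $b'\subset b\subseteq\mathcal{L}$ and all $s\subseteq\mathcal{L}\setminus b$ one has $w_{b\cup s}-w_b\ge w_{b'\cup s}-w_{b'}$; equivalently $w_{g\cup g'}+w_{g\cap g'}\ge w_g+w_{g'}$ for all genotypes $g,g'$. The triangulation induced by $w$ is the regular subdivision of $[0,1]^L$ obtained by projecting the upper faces of $\mathrm{conv}\{(g,w_g)\}\subset\mathbb{R}^{L+1}$; $w$ is generic if all $w_g$ are distinct and this subdivision is a triangulation. The standard staircase triangulation consists of the $L!$ simplices $\{g_0\subset g_1\subset\cdots\subset g_L\}$ with $g_0=\emptyset$, $g_L=\mathcal{L}$, $|g_k|=k$. *)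

theory Defs
  imports "HOL-Analysis.Analysis"
begin

text \<open>Loci are the elements of a finite type 'n, so L = CARD('n).
  A genotype is a subset of the loci; it is identified with the 0/1 vertex
  of the cube [0,1]^L given by its indicator vector.\<close>

definition geno_vec :: "'n::finite set \<Rightarrow> real^'n" where
  "geno_vec g = (\<chi> i. if i \<in> g then 1 else 0)"

definition universal_positive_epistasis :: "('n::finite set \<Rightarrow> real) \<Rightarrow> bool" where
  "universal_positive_epistasis w \<longleftrightarrow>
     (\<forall>b' b s. b' \<subset> b \<longrightarrow> s \<inter> b = {} \<longrightarrow> w (b \<union> s) - w b \<ge> w (b' \<union> s) - w b')"

text \<open>A (nonempty) cell of the regular subdivision induced by w: the set of genotypes
  whose lifted points (g, w g) lie on a non-vertical supporting hyperplane from above,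
  i.e. on an upper face of conv {(g, w g)}.\<close>
definition upper_cell :: "('n::finite set \<Rightarrow> real) \<Rightarrow> 'n set set \<Rightarrow> bool" where
  "upper_cell w S \<longleftrightarrow> S \<noteq> {} \<and>
     (\<exists>(a::real^'n) (c::real). (\<forall>g. w g \<le> c + a \<bullet> geno_vec g) \<and>
                         S = {g. w g = c + a \<bullet> geno_vec g})"

definition generic_landscape :: "('n::finite set \<Rightarrow> real) \<Rightarrow> bool" where
  "generic_landscape w \<longleftrightarrow> inj w \<and>
     (\<forall>S. upper_cell w S \<longrightarrow> \<not> affine_dependent (geno_vec ` S))"

definition induced_triangulation :: "('n::finite set \<Rightarrow> real) \<Rightarrow> 'n set set set" where
  "induced_triangulation w =
     {S. upper_cell w S \<and> (\<forall>T. upper_cell w T \<longrightarrow> S \<subseteq> T \<longrightarrow> T = S)}"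

text \<open>The standard staircase triangulation: its L! maximal simplices are the maximal chains
  {} = g_0 \<subset> g_1 \<subset> ... \<subset> g_L = all loci with |g_k| = k.\<close>
definition staircase_triangulation :: "'n::finite set set set" where
  "staircase_triangulation =
     {S. \<exists>ch :: nat \<Rightarrow> 'n set.
           ch 0 = {} \<and> ch CARD('n) = UNIV \<and>
           (\<forall>k < CARD('n). ch k \<subset> ch (Suc k)) \<and>
           (\<forall>k \<le> CARD('n). card (ch k) = k) \<and>
           S = ch ` {0..CARD('n)}}"

end

theory Submission
  imports Defs
begin

text \<open>Universal positive epistasis makes w supermodular on the Boolean lattice of genotypes.
  If two incomparable genotypes g, g' lie on a common upper face, supermodularity would force
  g \<union> g' and g \<inter> g' onto that face as well; but the four vertices satisfy
  v(g \<union> g') + v(g \<inter> g') = v(g) + v(g'), an affine dependence. Hence in a generic landscape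
  every cell is a chain. Conversely, along a maximal chain {} = g_0 \<subset> ... \<subset> g_L the affine
  function whose slope in the coordinate added at step k is w(g_(k+1)) - w(g_k) agrees with w
  on the chain and, by supermodularity, dominates w everywhere. So every maximal chain spans
  a cell, and as cells of a triangulation have at most L + 1 vertices, the maximal cells are
  exactly the maximal chains.\<close>

definition supermodular :: "('a set \<Rightarrow> real) \<Rightarrow> bool" where
  "supermodular w \<longleftrightarrow> (\<forall>g g'. w g + w g' \<le> w (g \<union> g') + w (g \<inter> g'))"

lemma universal_positive_epistasis_imp_supermodular:
  assumes "universal_positive_epistasis w"
  shows "supermodular w"
  unfolding supermodular_def
proof (intro allI)
  fix g g'
  show "w g + w g' \<le> w (g \<union> g') + w (g \<inter> g')"
  proof (cases "g \<subseteq> g'")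
    case True
    then show ?thesis by (simp add: Int_absorb2 sup.absorb2)
  next
    case False
    then have "g \<inter> g' \<subset> g" "(g' - g) \<inter> g = {}" by blast+
    then have "w (g \<union> (g' - g)) - w g \<ge> w ((g \<inter> g') \<union> (g' - g)) - w (g \<inter> g')"
      using assms unfolding universal_positive_epistasis_def by blast
    moreover have "g \<union> (g' - g) = g \<union> g'" "(g \<inter> g') \<union> (g' - g) = g'" by auto
    ultimately show ?thesis by simp
  qed
qed

lemma inj_geno_vec: "inj geno_vec"
proof (rule injI)
  fix g g' :: "'n::finite set"
  assume "geno_vec g = geno_vec g'"
  then have "(if i \<in> g then 1 else 0 :: real) = (if i \<in> g' then 1 else 0)" for i
    unfolding geno_vec_def vec_eq_iff by simp
  then show "g = g'" by (metis one_neq_zero set_eqI)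
qed

lemma geno_vec_union_inter:
  "geno_vec (g \<union> g') + geno_vec (g \<inter> g') = geno_vec g + geno_vec g'"
  unfolding geno_vec_def vec_eq_iff by auto

lemma inner_geno_vec_sum:
  assumes "finite K"
  shows "(\<chi> i. \<Sum>k\<in>K. if f k = i then d k else 0) \<bullet> geno_vec g
           = (\<Sum>k\<in>K. if f k \<in> g then d k else (0::real))"
proof -
  have "(\<chi> i. \<Sum>k\<in>K. if f k = i then d k else 0) \<bullet> geno_vec g
          = (\<Sum>i\<in>UNIV. \<Sum>k\<in>K. if f k = i then if i \<in> g then d k else 0 else 0)"
    unfolding inner_vec_def geno_vec_def by (auto simp: sum_distrib_right intro!: sum.cong)
  also have "\<dots> = (\<Sum>k\<in>K. \<Sum>i\<in>UNIV. if f k = i then if i \<in> g then d k else 0 else 0)"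
    by (rule sum.swap)
  also have "\<dots> = (\<Sum>k\<in>K. if f k \<in> g then d k else 0)"
    by simp
  finally show ?thesis .
qed

lemma affine_dependent_parallelogram:
  fixes a b c d :: "'a::real_vector"
  assumes "a + b = c + d" "distinct [a, b, c, d]" "{a, b, c, d} \<subseteq> X"
  shows "affine_dependent X"
proof -
  define u where "u v = (if v = a \<or> v = b then 1 else - 1 :: real)" for v
  have "affine_dependent {a, b, c, d}"
    unfolding affine_dependent_explicit
  proof (intro exI conjI)
    show "sum u {a, b, c, d} = 0"
      using assms(2) by (auto simp: u_def)
    have "(\<Sum>v\<in>{a, b, c, d}. u v *\<^sub>R v) = (a + b) - (c + d)"
      using assms(2) by (auto simp: u_def)
    then show "(\<Sum>v\<in>{a, b, c, d}. u v *\<^sub>R v) = 0"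
      using assms(1) by simp
  qed (auto simp: u_def)
  then show ?thesis using assms(3) affine_dependent_subset by blast
qed

lemma card_upper_cell_le:
  fixes w :: "'n::finite set \<Rightarrow> real"
  assumes "generic_landscape w" "upper_cell w S"
  shows "card S \<le> CARD('n) + 1"
proof -
  have "\<not> affine_dependent (geno_vec ` S)"
    using assms unfolding generic_landscape_def by blast
  then have "card (geno_vec ` S) < DIM(real^'n) + 2"
    using affine_dependent_biggerset[of "geno_vec ` S"] by fastforce
  moreover have "card (geno_vec ` S) = card S"
    by (rule card_image[OF inj_on_subset[OF inj_geno_vec subset_UNIV]])
  ultimately show ?thesis by simp
qed

lemma upper_cell_eq_if_card_ge:
  fixes w :: "'n::finite set \<Rightarrow> real"
  assumes "generic_landscape w" "upper_cell w T" "S \<subseteq> T" "CARD('n) + 1 \<le> card S"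
  shows "S = T"
  using card_upper_cell_le[OF assms(1,2)] assms(3,4)
  by (intro card_subset_eq) (auto dest: card_mono[OF finite])

lemma upper_cell_union_inter:
  assumes "supermodular w" "upper_cell w S" "g \<in> S" "g' \<in> S"
  shows "g \<union> g' \<in> S" "g \<inter> g' \<in> S"
proof -
  obtain a c where le: "\<And>h. w h \<le> c + a \<bullet> geno_vec h"
    and S: "S = {h. w h = c + a \<bullet> geno_vec h}"
    using assms(2) unfolding upper_cell_def by blast
  have "w g + w g' \<le> w (g \<union> g') + w (g \<inter> g')"
    using assms(1) unfolding supermodular_def by blast
  moreover have "a \<bullet> geno_vec (g \<union> g') + a \<bullet> geno_vec (g \<inter> g') = a \<bullet> geno_vec g + a \<bullet> geno_vec g'"
    by (metis geno_vec_union_inter inner_add_right)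
  moreover have "w g = c + a \<bullet> geno_vec g" "w g' = c + a \<bullet> geno_vec g'"
    using assms(3,4) S by auto
  ultimately have "w (g \<union> g') = c + a \<bullet> geno_vec (g \<union> g')" "w (g \<inter> g') = c + a \<bullet> geno_vec (g \<inter> g')"
    using le[of "g \<union> g'"] le[of "g \<inter> g'"] by linarith+
  then show "g \<union> g' \<in> S" "g \<inter> g' \<in> S" using S by auto
qed

lemma upper_cell_chain:
  assumes "generic_landscape w" "supermodular w" "upper_cell w S"
  shows "chain\<^sub>\<subseteq> S"
  unfolding chain_subset_def
proof (intro ballI)
  fix g g' assume g: "g \<in> S" "g' \<in> S"
  show "g \<subseteq> g' \<or> g' \<subseteq> g"
  proof (rule ccontr)
    assume "\<not> (g \<subseteq> g' \<or> g' \<subseteq> g)"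
    then have "distinct [g \<union> g', g \<inter> g', g, g']" by auto
    then have "distinct (map geno_vec [g \<union> g', g \<inter> g', g, g'])"
      by (simp add: inj_eq[OF inj_geno_vec])
    then have "affine_dependent (geno_vec ` S)"
      using upper_cell_union_inter[OF assms(2,3) g] g
      by (intro affine_dependent_parallelogram[OF geno_vec_union_inter]) auto
    then show False using assms(1,3) unfolding generic_landscape_def by blast
  qed
qed

locale maximal_chain =
  fixes ch :: "nat \<Rightarrow> 'n::finite set"
  assumes ch_0: "ch 0 = {}"
    and ch_top: "ch CARD('n) = UNIV"
    and ch_strict_step: "\<And>k. k < CARD('n) \<Longrightarrow> ch k \<subset> ch (Suc k)"
    and card_ch: "\<And>k. k \<le> CARD('n) \<Longrightarrow> card (ch k) = k"
begin

lemma ch_mono: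
  assumes "k \<le> j" "j \<le> CARD('n)"
  shows "ch k \<subseteq> ch j"
  using assms
proof (induction j rule: dec_induct)
  case (step j)
  then show ?case using ch_strict_step[of j] by auto
qed simp

definition added :: "nat \<Rightarrow> 'n" where
  "added k = the_elem (ch (Suc k) - ch k)"

lemma ch_Suc:
  assumes "k < CARD('n)"
  shows "ch (Suc k) = insert (added k) (ch k)" "added k \<notin> ch k"
proof -
  have sub: "ch k \<subseteq> ch (Suc k)" using ch_strict_step[OF assms] by blast
  then have "card (ch (Suc k) - ch k) = 1"
    using assms card_ch[of k] card_ch[of "Suc k"] by (simp add: card_Diff_subset)
  then obtain x where "ch (Suc k) - ch k = {x}" by (rule card_1_singletonE)
  then show "ch (Suc k) = insert (added k) (ch k)" "added k \<notin> ch k"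
    using sub unfolding added_def by auto
qed

lemma card_image_ch: "card (ch ` {0..CARD('n)}) = CARD('n) + 1"
proof -
  have "inj_on ch {0..CARD('n)}"
    by (rule inj_onI) (metis atLeastAtMost_iff card_ch)
  then show ?thesis by (simp add: card_image)
qed

definition slope :: "('n set \<Rightarrow> real) \<Rightarrow> real^'n" where
  "slope w = (\<chi> i. \<Sum>k<CARD('n). if added k = i then w (ch (Suc k)) - w (ch k) else 0)"

lemma slope_inner_geno_vec:
  "slope w \<bullet> geno_vec g = (\<Sum>k<CARD('n). if added k \<in> g then w (ch (Suc k)) - w (ch k) else 0)"
  unfolding slope_def by (rule inner_geno_vec_sum) simp

lemma telescope_along_ch:
  fixes w :: "'n set \<Rightarrow> real"
  shows "w g - w {} = (\<Sum>k<CARD('n). w (g \<inter> ch (Suc k)) - w (g \<inter> ch k))"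
  using sum_lessThan_telescope[of "\<lambda>k. w (g \<inter> ch k)" "CARD('n)"] by (simp add: ch_0 ch_top)

lemma step_le_increment:
  assumes "supermodular w" "k < CARD('n)"
  shows "w (g \<inter> ch (Suc k)) - w (g \<inter> ch k)
           \<le> (if added k \<in> g then w (ch (Suc k)) - w (ch k) else 0)"
proof (cases "added k \<in> g")
  case True
  have "(g \<inter> ch (Suc k)) \<union> ch k = ch (Suc k)" "(g \<inter> ch (Suc k)) \<inter> ch k = g \<inter> ch k"
    using True ch_Suc[OF assms(2)] by auto
  then have "w (g \<inter> ch (Suc k)) + w (ch k) \<le> w (ch (Suc k)) + w (g \<inter> ch k)"
    using assms(1) unfolding supermodular_def by metis
  then show ?thesis using True by simp
next
  case False
  then have "g \<inter> ch (Suc k) = g \<inter> ch k" using ch_Suc[OF assms(2)] by auto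
  then show ?thesis using False by simp
qed

lemma step_on_ch:
  fixes w :: "'n set \<Rightarrow> real"
  assumes "k < CARD('n)" "j \<le> CARD('n)"
  shows "w (ch j \<inter> ch (Suc k)) - w (ch j \<inter> ch k)
           = (if added k \<in> ch j then w (ch (Suc k)) - w (ch k) else 0)"
proof (cases "k < j")
  case True
  then have "ch (Suc k) \<subseteq> ch j" using ch_mono assms by simp
  then show ?thesis using ch_Suc[OF assms(1)] by (auto simp: Int_absorb1)
next
  case False
  then have "ch j \<subseteq> ch k" using ch_mono assms by simp
  then show ?thesis using ch_Suc[OF assms(1)] by (auto simp: Int_absorb2)
qed

lemma le_affine_slope:
  assumes "supermodular w"
  shows "w g \<le> w {} + slope w \<bullet> geno_vec g"
proof -
  have "w g - w {} = (\<Sum>k<CARD('n). w (g \<inter> ch (Suc k)) - w (g \<inter> ch k))"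
    by (rule telescope_along_ch)
  also have "\<dots> \<le> (\<Sum>k<CARD('n). if added k \<in> g then w (ch (Suc k)) - w (ch k) else 0)"
    by (intro sum_mono step_le_increment[OF assms]) simp
  also have "\<dots> = slope w \<bullet> geno_vec g"
    by (rule slope_inner_geno_vec[symmetric])
  finally show ?thesis by simp
qed

lemma eq_affine_slope_ch:
  fixes w :: "'n set \<Rightarrow> real"
  assumes "j \<le> CARD('n)"
  shows "w (ch j) = w {} + slope w \<bullet> geno_vec (ch j)"
proof -
  have "w (ch j) - w {} = (\<Sum>k<CARD('n). w (ch j \<inter> ch (Suc k)) - w (ch j \<inter> ch k))"
    by (rule telescope_along_ch)
  also have "\<dots> = (\<Sum>k<CARD('n). if added k \<in> ch j then w (ch (Suc k)) - w (ch k) else 0)"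
    by (intro sum.cong refl step_on_ch[OF _ assms]) simp
  also have "\<dots> = slope w \<bullet> geno_vec (ch j)"
    by (rule slope_inner_geno_vec[symmetric])
  finally show ?thesis by simp
qed

lemma upper_cell_ch:
  assumes "generic_landscape w" "supermodular w"
  shows "upper_cell w (ch ` {0..CARD('n)})"
proof -
  define U where "U = {g. w g = w {} + slope w \<bullet> geno_vec g}"
  have sub: "ch ` {0..CARD('n)} \<subseteq> U" unfolding U_def using eq_affine_slope_ch by auto
  then have "U \<noteq> {}" by auto
  then have cell: "upper_cell w U"
    unfolding upper_cell_def U_def using le_affine_slope[OF assms(2)] by blast
  then have "ch ` {0..CARD('n)} = U"
    using upper_cell_eq_if_card_ge[OF assms(1) cell sub] card_image_ch by simp
  then show ?thesis using cell by simp
qed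

end

lemma staircase_triangulation_eq:
  "staircase_triangulation = {ch ` {0..CARD('n)} | ch :: nat \<Rightarrow> 'n::finite set. maximal_chain ch}"
  unfolding staircase_triangulation_def maximal_chain_def by auto

lemma filter_mem_append_filter_not_mem:
  assumes "sorted_wrt (\<lambda>x y. y \<in> s \<longrightarrow> x \<in> s) ys"
  shows "ys = filter (\<lambda>x. x \<in> s) ys @ filter (\<lambda>x. x \<notin> s) ys"
  using assms
proof (induction ys)
  case (Cons y ys)
  show ?case
  proof (cases "y \<in> s")
    case True
    then show ?thesis using Cons by simp
  next
    case False
    then have "\<forall>z\<in>set ys. z \<notin> s" using Cons.prems by auto
    then show ?thesis using False by (simp add: filter_empty_conv)
  qed
qed simp

text \<open>Listing the loci by increasing number of members of S that miss them, every s \<in> S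
  becomes an initial segment of the list.\<close>
lemma chain_subset_extends_to_maximal_chain:
  fixes S :: "'n::finite set set"
  assumes "chain\<^sub>\<subseteq> S"
  obtains ch where "maximal_chain ch" "S \<subseteq> ch ` {0..CARD('n)}"
proof -
  define f where "f i = card {t\<in>S. i \<notin> t}" for i
  have f_less: "f i < f j" if "s \<in> S" "i \<in> s" "j \<notin> s" for s i j
  proof -
    have "{t\<in>S. i \<notin> t} \<subseteq> {t\<in>S. j \<notin> t}"
      using assms that unfolding chain_subset_def by blast
    moreover have "s \<in> {t\<in>S. j \<notin> t} - {t\<in>S. i \<notin> t}" using that by auto
    ultimately have "{t\<in>S. i \<notin> t} \<subset> {t\<in>S. j \<notin> t}" by blast
    then show ?thesis unfolding f_def by (rule psubset_card_mono[OF finite])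
  qed
  obtain xs :: "'n list" where xs: "set xs = UNIV" "distinct xs"
    using finite_distinct_list[of "UNIV :: 'n set"] by auto
  define ys where "ys = sort_key f xs"
  have ys: "set ys = UNIV" "distinct ys" "length ys = CARD('n)"
    unfolding ys_def using xs distinct_card[of xs] by auto
  have ys_sorted: "sorted_wrt (\<lambda>x y. f x \<le> f y) ys"
    using sorted_sort_key[of f xs] unfolding ys_def sorted_map .
  define ch where "ch m = set (take m ys)" for m
  have "maximal_chain ch"
  proof
    show "ch 0 = {}" "ch CARD('n) = UNIV" unfolding ch_def using ys by auto
    show "card (ch k) = k" if "k \<le> CARD('n)" for k
      unfolding ch_def using ys that by (simp add: distinct_card)
    show "ch k \<subset> ch (Suc k)" if "k < CARD('n)" for k
    proof -
      have take_Suc: "take (Suc k) ys = take k ys @ [ys ! k]"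
        using ys(3) that by (simp add: take_Suc_conv_app_nth)
      then have "distinct (take k ys @ [ys ! k])"
        using ys(2) by (metis distinct_take)
      then show ?thesis
        unfolding ch_def take_Suc by auto
    qed
  qed
  moreover have "s \<in> ch ` {0..CARD('n)}" if "s \<in> S" for s
  proof -
    have "sorted_wrt (\<lambda>x y. y \<in> s \<longrightarrow> x \<in> s) ys"
      using ys_sorted by (rule sorted_wrt_mono_rel[rotated]) (use f_less[OF that] in force)
    then have split: "ys = filter (\<lambda>x. x \<in> s) ys @ filter (\<lambda>x. x \<notin> s) ys"
      by (rule filter_mem_append_filter_not_mem)
    have "set (filter (\<lambda>x. x \<in> s) ys) = s" "length (filter (\<lambda>x. x \<in> s) ys) = card s"
      using ys by (auto simp: distinct_card[symmetric])
    then have "ch (card s) = s"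
      unfolding ch_def by (metis append_eq_conv_conj split)
    moreover have "card s \<le> CARD('n)" by (simp add: card_mono)
    ultimately show ?thesis by force
  qed
  ultimately show ?thesis using that by blast
qed

theorem mainTheorem11:
  fixes w :: "'n::finite set \<Rightarrow> real"
  assumes "\<forall>g. w g \<ge> 0"
    and "generic_landscape w"
    and "universal_positive_epistasis w"
  shows "induced_triangulation w = staircase_triangulation"
proof -
  have sm: "supermodular w"
    using assms(3) by (rule universal_positive_epistasis_imp_supermodular)
  have "S \<in> induced_triangulation w \<longleftrightarrow> S \<in> staircase_triangulation" for S
  proof
    assume "S \<in> induced_triangulation w"
    then have cell: "upper_cell w S" and max: "\<And>T. upper_cell w T \<Longrightarrow> S \<subseteq> T \<Longrightarrow> T = S"
      unfolding induced_triangulation_def by auto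
    obtain ch where ch: "maximal_chain ch" "S \<subseteq> ch ` {0..CARD('n)}"
      using upper_cell_chain[OF assms(2) sm cell] by (rule chain_subset_extends_to_maximal_chain)
    then have "S = ch ` {0..CARD('n)}"
      using max maximal_chain.upper_cell_ch[OF ch(1) assms(2) sm] by blast
    then show "S \<in> staircase_triangulation"
      using ch(1) by (auto simp: staircase_triangulation_eq)
  next
    assume "S \<in> staircase_triangulation"
    then obtain ch where ch: "maximal_chain ch" "S = ch ` {0..CARD('n)}"
      by (auto simp: staircase_triangulation_eq)
    have "T = S" if "upper_cell w T" "S \<subseteq> T" for T
      using upper_cell_eq_if_card_ge[OF assms(2) that] maximal_chain.card_image_ch[OF ch(1)] ch(2)
      by simp
    then show "S \<in> induced_triangulation w"
      using maximal_chain.upper_cell_ch[OF ch(1) assms(2) sm] ch(2)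
      unfolding induced_triangulation_def by auto
  qed
  then show ?thesis by blast
qed

end
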